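(* Let $P(t)=\binom{r+t}{r}-\binom{r+t-d}{r}$. For every integer $D\ge 0$, every indivisible one-parameter subgroup $\lambda\in\Gamma(T)$ and every real $\delta>0$, $$E_{d+D,[\lambda],|M_D|\,\delta}=E_{d,[\lambda],\delta}$$ as subsets of $\mathrm{Hilb}^P(\mathbb{P}^r_k)$. Consequently, for all integers $t\ge d$ the Hesselink stratifications $\mathrm{Hilb}^P(\mathbb{P}^r_k)^{us}_t=\coprod_{[\lambda],\delta>0}E_{t,[\lambda],\delta}$ coincide (up to the rescaling $\delta\mapsto |M_{t-d}|\delta$ of the index $\delta$), and in particular $\mathrm{Hilb}^P(\mathbb{P}^r_k)^{us}_{d+D}=\mathrm{Hilb}^P(\mathbb{P}^r_k)^{us}_{d}$ as sets for every $D\ge 0$.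
   Context: Let $k$ be an algebraically closed field, $r\ge1$, $d\ge1$ integers, $S=k[x_0,\dots,x_r]$ graded by degree, $S_t$ its degree-$t$ part, and $M_t$ the set of monomials of degree $t$ (so $|M_t|=\binom{r+t}{r}$). Let $P(t)=\binom{r+t}{r}-\binom{r+t-d}{r}$; then $\mathrm{Hilb}^P(\mathbb{P}^r_k)$ parametrizes hypersurfaces of degree $d$: a closed point $x$ corresponds to $H_x=V(f)$ with $0\ne f\in S_d$ unique up to scalar. For $t\ge d$ put $Q(t)=\dim S_t-P(t)=|M_{t-d}|$ and let $\phi_t:\mathrm{Hilb}^P(\mathbb{P}^r_k)\to\mathbb{P}(\bigwedge^{Q(t)}S_t)$ send $x$ to the Plücker point $[\bigwedge^{Q(t)}(f\cdot S_{t-d})]$ of the degree-$t$ part of the ideal $(f)$ (the $t$-th Hilbert point). $G=\mathrm{GL}_{r+1}(k)$ acts on $S_1=\mathrm{span}(x_0,\dots,x_r)$ by the standard representation, hence on $S$, on the Hilbert scheme ($g.x$ corresponds to $g.f$) and on $\mathbb{P}(\bigwedge^{Q(t)}S_t)$, compatibly with $\phi_t$. Let $H=\mathrm{SL}_{r+1}(k)$, $T_0\subset G$ the diagonal torus, $T=T_0\cap H$. Identify $\Gamma(T_0)\cong\mathbb{Z}^{r+1}$: $\lambda=(a_0,\dots,a_r)$ means $\lambda(s)=\mathrm{diag}(s^{a_0},\dots,s^{a_r})$; then $\lambda(s)$ multiplies the monomial $x_0^{e_0}\cdots x_r^{e_r}$ by $s^{\sum a_ie_i}$, and $\Gamma(T)$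 consists of those $\lambda$ with $\sum a_i=0$. Fix a conjugation-invariant norm $\Vert\cdot\Vert$ on the set $\Gamma(G)$ of one-parameter subgroups which equals the Euclidean norm $\sqrt{\sum a_i^2}$ on $\Gamma(T_0)$. A one-parameter subgroup is indivisible if it is not $n\mu$ for an integer $n\ge2$ and a one-parameter subgroup $\mu$. For a $G$-representation $V$, $0\ne v\in V$ and $\lambda\in\Gamma(G)$, write $v=\sum_i v_i$ with $\lambda(s)v_i=s^iv_i$ and set $\mu(v,\lambda)=\min\{i: v_i\neq 0\}$ (well defined on projective points). For $t\ge d$ let $\Lambda_{x,t}$ be the (nonempty) set of indivisible $\lambda\in\Gamma(H)$ maximizing $\mu(\phi_t(x),\lambda)/\Vert\lambda\Vert$; $x$ is unstable at level $t$ if this maximum is $>0$, and $\mathrm{Hilb}^P(\mathbb{P}^r_k)^{us}_t$ is the set of such $x$. For an indivisible $\lambda\in\Gamma(T)$ and $\delta>0$, $E_{t,[\lambda],\delta}$ is the set of $x$ such that $\Lambda_{x,t}$ meets the $G$-conjugacy class $[\lambda]$ of $\lambda$ and the maximum value of $\mu(\phi_t(x),\cdot)/\Vert\cdot\Vert$ equals $\delta$ (Hesselink strata). *)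

theory Defs
  imports "HOL-Analysis.Analysis" "HOL-Computational_Algebra.Polynomial" "HOL-Library.Poly_Mapping"
begin

(* Variables x_i are indexed by a finite type 'n with CARD('n) = r+1.
  Monomials are exponent vectors 'n \<Rightarrow>\<^sub>0 nat, elements of S = k[x_i] are
  finitely supported coefficient functions on monomials (with the convolution
  product of Poly_Mapping). *)

type_synonym ('n, 'k) hpoly = "('n \<Rightarrow>\<^sub>0 nat) \<Rightarrow>\<^sub>0 'k"

definition mdeg :: "('n::finite \<Rightarrow>\<^sub>0 nat) \<Rightarrow> nat" where
  "mdeg m = (\<Sum>i\<in>UNIV. Poly_Mapping.lookup m i)"

definition mons :: "nat \<Rightarrow> ('n::finite \<Rightarrow>\<^sub>0 nat) set" where
  "mons t = {m. mdeg m = t}"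

definition homog :: "nat \<Rightarrow> ('n::finite, 'k::zero) hpoly set" where
  "homog t = {f. Poly_Mapping.keys f \<subseteq> mons t}"

definition hvar :: "'n \<Rightarrow> ('n, 'k::{zero,one}) hpoly" where
  "hvar i = Poly_Mapping.single (Poly_Mapping.single i 1) 1"

definition hconst :: "'k::zero \<Rightarrow> ('n, 'k) hpoly" where
  "hconst c = Poly_Mapping.single 0 c"

definition gl_act :: "'k::comm_ring_1^'n^'n \<Rightarrow> ('n::finite, 'k) hpoly \<Rightarrow> ('n, 'k) hpoly" where
  "gl_act g f = (\<Sum>m\<in>Poly_Mapping.keys f. hconst (Poly_Mapping.lookup f m) *
      (\<Prod>j\<in>UNIV. (\<Sum>i\<in>UNIV. hconst (g $ i $ j) * hvar i) ^ Poly_Mapping.lookup m j))"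

definition wt :: "('n::finite \<Rightarrow> int) \<Rightarrow> ('n \<Rightarrow>\<^sub>0 nat) \<Rightarrow> int" where
  "wt a m = (\<Sum>i\<in>UNIV. a i * int (Poly_Mapping.lookup m i))"

definition ops_norm :: "('n::finite \<Rightarrow> int) \<Rightarrow> real" where
  "ops_norm a = sqrt (\<Sum>i\<in>UNIV. (real_of_int (a i))\<^sup>2)"

(* One-parameter subgroups of T = T_0 \<inter> SL: sum of weights zero. *)
definition torus_H :: "('n::finite \<Rightarrow> int) set" where
  "torus_H = {a. (\<Sum>i\<in>UNIV. a i) = 0}"

definition indivisible :: "('n::finite \<Rightarrow> int) \<Rightarrow> bool" where
  "indivisible a \<longleftrightarrow> \<not> (\<exists>(n::int) b. n \<ge> 2 \<and> a = (\<lambda>i. n * b i))"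

(* mu(phi_t(f), a) for diagonal a: the Plucker coordinate of the Q(t)-dimensional
  subspace W = f * S_{t-d} of S_t at a Q(t)-subset I of M_t is nonzero iff the
  coordinate projection W \<rightarrow> k^I is injective, i.e. iff no nonzero element f*h of W
  has all its coefficients at monomials of I equal to zero; the weight of the
  basis vector e_I of the exterior power is the sum of the weights of m \<in> I. *)
definition hilb_mu :: "nat \<Rightarrow> nat \<Rightarrow> ('n::finite, 'k::comm_ring_1) hpoly \<Rightarrow> ('n \<Rightarrow> int) \<Rightarrow> int" where
  "hilb_mu d t f a = Min {(\<Sum>m\<in>I. wt a m) | I.
      I \<subseteq> mons t \<and> card I = card (mons (t - d) :: ('n \<Rightarrow>\<^sub>0 nat) set) \<and>
      (\<forall>h\<in>homog (t - d). h \<noteq> 0 \<longrightarrow> (\<exists>m\<in>I. Poly_Mapping.lookup (f * h) m \<noteq> 0))}"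

(* mu(phi_t(f), g^{-1} a g)/||.||: a general one-parameter subgroup of H is
  conjugate g^{-1} (diag a) g, and mu(v, g^{-1} lambda g) = mu(g v, lambda). *)
definition hratio :: "nat \<Rightarrow> nat \<Rightarrow> ('n::finite, 'k::comm_ring_1) hpoly \<Rightarrow> 'k^'n^'n \<Rightarrow> ('n \<Rightarrow> int) \<Rightarrow> real" where
  "hratio d t f g a = real_of_int (hilb_mu d t (gl_act g f) a) / ops_norm a"

definition is_max_value :: "nat \<Rightarrow> nat \<Rightarrow> ('n::finite, 'k::comm_ring_1) hpoly \<Rightarrow> real \<Rightarrow> bool" where
  "is_max_value d t f \<delta> \<longleftrightarrow>
     (\<exists>g b. invertible g \<and> b \<in> torus_H \<and> indivisible b \<and> hratio d t f g b = \<delta>) \<and>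
     (\<forall>g b. invertible g \<and> b \<in> torus_H \<and> indivisible b \<longrightarrow> hratio d t f g b \<le> \<delta>)"

(* Hesselink stratum E_{t,[a],delta} (as the set of nonzero equations f of degree d). *)
definition hstratum :: "nat \<Rightarrow> nat \<Rightarrow> ('n::finite \<Rightarrow> int) \<Rightarrow> real \<Rightarrow> ('n, 'k::comm_ring_1) hpoly set" where
  "hstratum d t a \<delta> = {f \<in> homog d. f \<noteq> 0 \<and> is_max_value d t f \<delta> \<and>
      (\<exists>g. invertible (g :: 'k^'n^'n) \<and> hratio d t f g a = \<delta>)}"

definition hunstable :: "nat \<Rightarrow> nat \<Rightarrow> ('n::finite, 'k::comm_ring_1) hpoly set" where
  "hunstable d t = {f \<in> homog d. f \<noteq> 0 \<and> (\<exists>\<delta>>0. is_max_value d t f \<delta>)}"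

end

(* Let b be a diagonal one-parameter subgroup of SL (integer weights summing to 0) and G a nonzero
  form of degree d with least b-weight w of a monomial. Then the weight hilb_mu of the Hilbert point
  at level d + D is exactly |M_D| w.  Lower bound: a nonzero Pluecker coordinate of G S_D at a set I
  of |M_D| monomials gives, through a nonzero term of the determinant, a bijection sigma from I onto
  M_D such that m - sigma m is a monomial of G; hence the weight of I is at least |M_D| w plus the
  weight of M_D, which vanishes by symmetry.  Upper bound: if ms is the least monomial of G for a
  monomial order refining the b-weight, then ms + ns is the leading monomial of G h for every nonzero
  h in S_D, so the Pluecker coordinate at ms + M_D is nonzero, and this set has weight |M_D| w.
  Applied to G = g f for all g, every normalized weight at level d + D is |M_D| times the one at
  level d, so maximal values, strata and unstable loci correspond. *)

theory Submission
  imports Defs "Jordan_Normal_Form.Determinant"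
begin

(* Keeps "$" for the entries of the HOL-Analysis matrices acting in gl_act. *)
no_notation Matrix.vec_index (infixl "$" 100)

section \<open>Monomials and their weights\<close>

lemma mdeg_add: "mdeg (m + n) = mdeg m + mdeg (n :: 'n::finite \<Rightarrow>\<^sub>0 nat)"
  by (simp add: mdeg_def lookup_add sum.distrib)

lemma wt_add: "wt b (m + n) = wt b m + wt b n"
  by (simp add: wt_def lookup_add sum.distrib algebra_simps)

lemma lookup_le_mdeg: "Poly_Mapping.lookup m i \<le> mdeg (m :: 'n::finite \<Rightarrow>\<^sub>0 nat)"
  unfolding mdeg_def by (rule member_le_sum) auto

lemma finite_mons: "finite (mons t :: ('n::finite \<Rightarrow>\<^sub>0 nat) set)"
proof -
  have "Poly_Mapping.lookup ` (mons t :: ('n \<Rightarrow>\<^sub>0 nat) set) \<subseteq> PiE UNIV (\<lambda>_. {..t})"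
    using lookup_le_mdeg by (fastforce simp: mons_def)
  then have "finite (Poly_Mapping.lookup ` (mons t :: ('n \<Rightarrow>\<^sub>0 nat) set))"
    by (rule finite_subset) (simp add: finite_PiE)
  then show ?thesis
    by (rule finite_imageD) (simp add: inj_on_def)
qed

lemma mons_0: "mons 0 = {0 :: 'n::finite \<Rightarrow>\<^sub>0 nat}"
proof -
  have "m = 0" if "mdeg m = 0" for m :: "'n \<Rightarrow>\<^sub>0 nat"
    using lookup_le_mdeg[of m] that by (intro poly_mapping_eqI) simp
  then show ?thesis by (auto simp: mons_def mdeg_def)
qed

lemma single_in_mons: "Poly_Mapping.single i t \<in> (mons t :: ('n::finite \<Rightarrow>\<^sub>0 nat) set)"
  by (simp add: mons_def mdeg_def lookup_single when_def)

lemma card_mons_pos: "card (mons t :: ('n::finite \<Rightarrow>\<^sub>0 nat) set) > 0"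
  using single_in_mons finite_mons by (metis card_gt_0_iff empty_iff)

lemma sum_lookup_mons_eq:
  fixes i j :: "'n::finite"
  shows "(\<Sum>n\<in>mons D. Poly_Mapping.lookup n i) = (\<Sum>n\<in>mons D. Poly_Mapping.lookup n j)"
proof -
  let ?\<tau> = "Transposition.transpose i j"
  define \<sigma> :: "('n \<Rightarrow>\<^sub>0 nat) \<Rightarrow> ('n \<Rightarrow>\<^sub>0 nat)" where "\<sigma> = Poly_Mapping.map_key ?\<tau>"
  have lookup_\<sigma>: "Poly_Mapping.lookup (\<sigma> n) k = Poly_Mapping.lookup n (?\<tau> k)" for n k
    by (simp add: \<sigma>_def map_key.rep_eq inj_transpose)
  have \<sigma>\<sigma>: "\<sigma> (\<sigma> n) = n" for n
    by (rule poly_mapping_eqI) (simp add: lookup_\<sigma>)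
  have "mdeg (\<sigma> n) = mdeg n" for n
    unfolding mdeg_def lookup_\<sigma> by (rule sum.reindex_bij_betw) simp
  then have "bij_betw \<sigma> (mons D) (mons D)"
    by (intro bij_betwI[of _ _ _ \<sigma>]) (auto simp: mons_def \<sigma>\<sigma>)
  then have "(\<Sum>n\<in>mons D. Poly_Mapping.lookup n i) = (\<Sum>n\<in>mons D. Poly_Mapping.lookup (\<sigma> n) i)"
    by (rule sum.reindex_bij_betw[symmetric])
  then show ?thesis by (simp add: lookup_\<sigma>)
qed

lemma sum_wt_mons:
  fixes b :: "'n::finite \<Rightarrow> int" and j :: 'n
  shows "(\<Sum>n\<in>mons D. wt b n) = sum b UNIV * int (\<Sum>n\<in>mons D. Poly_Mapping.lookup n j)"
proof -
  define c where "c = (\<Sum>n\<in>(mons D :: ('n \<Rightarrow>\<^sub>0 nat) set). Poly_Mapping.lookup n j)"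
  have c: "(\<Sum>n\<in>mons D. Poly_Mapping.lookup n i) = c" for i :: 'n
    unfolding c_def by (rule sum_lookup_mons_eq)
  have "(\<Sum>n\<in>mons D. wt b n) = (\<Sum>i\<in>UNIV. b i * int (\<Sum>n\<in>mons D. Poly_Mapping.lookup n i))"
    unfolding wt_def of_nat_sum sum_distrib_left by (rule sum.swap)
  also have "\<dots> = (\<Sum>i\<in>UNIV. b i * int c)"
    by (simp only: c)
  also have "\<dots> = sum b UNIV * int c"
    by (rule sum_distrib_right[symmetric])
  finally show ?thesis by (simp add: c_def)
qed

lemma sum_wt_mons_eq_0: "sum b UNIV = 0 \<Longrightarrow> (\<Sum>n\<in>(mons D :: ('n::finite \<Rightarrow>\<^sub>0 nat) set). wt b n) = 0"
  by (metis sum_wt_mons mult_zero_left)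

section \<open>Leading terms for a monomial order refining the weight\<close>

(* The weight comes first, then the exponents in the enumeration to_nat of the variables: the
  lexicographic order on nat \<Rightarrow>\<^sub>0 int is compatible with addition, so this is a monomial
  order refining the weight. *)
definition weight_lex_key :: "('n::finite \<Rightarrow> int) \<Rightarrow> ('n \<Rightarrow>\<^sub>0 nat) \<Rightarrow> nat \<Rightarrow>\<^sub>0 int" where
  "weight_lex_key b m = Poly_Mapping.single 0 (wt b m) +
     (\<Sum>i\<in>UNIV. Poly_Mapping.single (Suc (to_nat i)) (int (Poly_Mapping.lookup m i)))"

lemma weight_lex_key_add: "weight_lex_key b (m + n) = weight_lex_key b m + weight_lex_key b n"
  by (simp add: weight_lex_key_def wt_add lookup_add single_add sum.distrib ac_simps)

lemma lookup_weight_lex_key_0: "Poly_Mapping.lookup (weight_lex_key b m) 0 = wt b m"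
  by (simp add: weight_lex_key_def lookup_add lookup_sum lookup_single)

lemma lookup_weight_lex_key_Suc:
  "Poly_Mapping.lookup (weight_lex_key b m) (Suc (to_nat i)) = int (Poly_Mapping.lookup m i)"
  by (simp add: weight_lex_key_def lookup_add lookup_sum lookup_single when_def)

lemma inj_weight_lex_key: "inj (weight_lex_key b)"
proof (rule injI)
  fix m n assume "weight_lex_key b m = weight_lex_key b n"
  then show "m = n"
    by (metis lookup_weight_lex_key_Suc of_nat_eq_iff poly_mapping_eqI)
qed

lemma wt_le_if_weight_lex_key_le:
  assumes "weight_lex_key b m \<le> weight_lex_key b n"
  shows "wt b m \<le> wt b n"
proof (rule ccontr)
  assume "\<not> wt b m \<le> wt b n"
  then have "weight_lex_key b n < weight_lex_key b m"
    by (auto simp: less_poly_mapping.rep_eq less_fun_def lookup_weight_lex_key_0 intro!: exI[of _ 0])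
  with assms show False
    by simp
qed

lemma add_le_add_eq_imp_eq:
  fixes a b x y :: "'a::ordered_cancel_comm_monoid_add"
  assumes "a \<le> x" "b \<le> y" "x + y = a + b"
  shows "x = a \<and> y = b"
proof -
  have "\<not> a < x" using add_less_le_mono[of a x b y] assms by auto
  moreover have "\<not> b < y" using add_le_less_mono[of a x b y] assms by auto
  ultimately show ?thesis using assms by (simp add: order.order_iff_strict)
qed

lemma lookup_mult_keys:
  "Poly_Mapping.lookup (p * q) x = (\<Sum>k\<in>Poly_Mapping.keys p. \<Sum>n\<in>Poly_Mapping.keys q.
      if k + n = x then Poly_Mapping.lookup p k * Poly_Mapping.lookup q n else 0)"
proof -
  have inner: "Sum_any (\<lambda>n. Poly_Mapping.lookup q n when x = k + n)
      = (\<Sum>n\<in>Poly_Mapping.keys q. if k + n = x then Poly_Mapping.lookup q n else 0)" for k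
    by (subst Sum_any.expand_superset[of "Poly_Mapping.keys q"])
      (auto simp: when_def in_keys_iff intro!: sum.cong)
  have "Poly_Mapping.lookup (p * q) x = (\<Sum>k\<in>Poly_Mapping.keys p. Poly_Mapping.lookup p k *
      (\<Sum>n\<in>Poly_Mapping.keys q. if k + n = x then Poly_Mapping.lookup q n else 0))"
    unfolding lookup_mult inner
    by (subst Sum_any.expand_superset[of "Poly_Mapping.keys p"]) (auto simp: in_keys_iff)
  then show ?thesis
    by (simp add: sum_distrib_left if_distrib cong: if_cong)
qed

lemma lookup_mult_unique_decomp:
  assumes "\<And>k n. k \<in> Poly_Mapping.keys p \<Longrightarrow> n \<in> Poly_Mapping.keys q \<Longrightarrow> k + n = a + c \<Longrightarrow> k = a \<and> n = c"
  shows "Poly_Mapping.lookup (p * q) (a + c) = Poly_Mapping.lookup p a * Poly_Mapping.lookup q c"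
proof -
  have "Poly_Mapping.lookup (p * q) (a + c) = (\<Sum>k\<in>Poly_Mapping.keys p. \<Sum>n\<in>Poly_Mapping.keys q.
      if k = a \<and> n = c then Poly_Mapping.lookup p k * Poly_Mapping.lookup q n else 0)"
    unfolding lookup_mult_keys by (intro sum.cong refl) (simp add: assms)
  also have "\<dots> = (\<Sum>k\<in>Poly_Mapping.keys p. if k = a then
      (\<Sum>n\<in>Poly_Mapping.keys q. if n = c then Poly_Mapping.lookup p a * Poly_Mapping.lookup q n else 0) else 0)"
    by (intro sum.cong refl) auto
  finally show ?thesis
    by (simp add: in_keys_iff)
qed

lemma lookup_mult_single:
  "Poly_Mapping.lookup (p * Poly_Mapping.single n c) x =
     (\<Sum>k\<in>Poly_Mapping.keys p. if k + n = x then Poly_Mapping.lookup p k else 0) * (c :: 'k::comm_ring_1)"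
proof (cases "c = 0")
  case False
  then show ?thesis
    unfolding lookup_mult_keys by (auto simp: sum_distrib_right intro!: sum.cong)
qed simp

lemma lookup_mult_weight_lex_min:
  assumes "\<And>k. k \<in> Poly_Mapping.keys p \<Longrightarrow> weight_lex_key b ms \<le> weight_lex_key b k"
    and "\<And>n. n \<in> Poly_Mapping.keys q \<Longrightarrow> weight_lex_key b ns \<le> weight_lex_key b n"
  shows "Poly_Mapping.lookup (p * q) (ms + ns) = Poly_Mapping.lookup p ms * Poly_Mapping.lookup q ns"
proof (rule lookup_mult_unique_decomp)
  fix k n assume "k \<in> Poly_Mapping.keys p" "n \<in> Poly_Mapping.keys q" "k + n = ms + ns"
  then have "weight_lex_key b k = weight_lex_key b ms \<and> weight_lex_key b n = weight_lex_key b ns"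
    using assms by (intro add_le_add_eq_imp_eq) (simp_all flip: weight_lex_key_add)
  then show "k = ms \<and> n = ns"
    using inj_weight_lex_key by (auto dest: injD)
qed

section \<open>The weight of the Hilbert point of a form\<close>

definition pluecker_nonzero :: "('n::finite, 'k::comm_ring_1) hpoly \<Rightarrow> nat \<Rightarrow> ('n \<Rightarrow>\<^sub>0 nat) set \<Rightarrow> bool" where
  "pluecker_nonzero G D I \<longleftrightarrow>
     (\<forall>h\<in>homog D. h \<noteq> 0 \<longrightarrow> (\<exists>m\<in>I. Poly_Mapping.lookup (G * h) m \<noteq> 0))"

lemma pluecker_nonzero_translate_mons:
  fixes G :: "('n::finite, 'k::idom) hpoly" and b :: "'n \<Rightarrow> int"
  assumes "G \<noteq> 0"
  obtains ms where "ms \<in> Poly_Mapping.keys G" "wt b ms = Min (wt b ` Poly_Mapping.keys G)"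
    "pluecker_nonzero G D ((+) ms ` mons D)"
proof
  let ?ms = "arg_min_on (weight_lex_key b) (Poly_Mapping.keys G)"
  have keys_G: "finite (Poly_Mapping.keys G)" "Poly_Mapping.keys G \<noteq> {}"
    using assms by auto
  show ms: "?ms \<in> Poly_Mapping.keys G"
    using arg_min_if_finite(1)[OF keys_G] .
  have ms_min: "weight_lex_key b ?ms \<le> weight_lex_key b k" if "k \<in> Poly_Mapping.keys G" for k
    using arg_min_least[OF keys_G that] .
  show "wt b ?ms = Min (wt b ` Poly_Mapping.keys G)"
    using keys_G ms ms_min by (intro Min_eqI[symmetric]) (auto intro: wt_le_if_weight_lex_key_le)
  show "pluecker_nonzero G D ((+) ?ms ` mons D)"
    unfolding pluecker_nonzero_def
  proof (intro ballI impI)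
    fix h :: "('n, 'k) hpoly"
    assume h: "h \<in> homog D" "h \<noteq> 0"
    let ?ns = "arg_min_on (weight_lex_key b) (Poly_Mapping.keys h)"
    have keys_h: "finite (Poly_Mapping.keys h)" "Poly_Mapping.keys h \<noteq> {}"
      using h by auto
    have ns: "?ns \<in> Poly_Mapping.keys h"
      using arg_min_if_finite(1)[OF keys_h] .
    have "Poly_Mapping.lookup (G * h) (?ms + ?ns) = Poly_Mapping.lookup G ?ms * Poly_Mapping.lookup h ?ns"
      using ms_min arg_min_least[OF keys_h] by (rule lookup_mult_weight_lex_min)
    also have "\<dots> \<noteq> 0"
      using ms ns by (simp add: in_keys_iff)
    finally show "\<exists>m\<in>(+) ?ms ` mons D. Poly_Mapping.lookup (G * h) m \<noteq> 0"
      using ns h(1) by (auto simp: homog_def)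
  qed
qed

lemma sum_wt_translate_mons:
  fixes b :: "'n::finite \<Rightarrow> int"
  assumes "sum b UNIV = 0"
  shows "(\<Sum>m\<in>(+) ms ` mons D. wt b m) = int (card (mons D :: ('n \<Rightarrow>\<^sub>0 nat) set)) * wt b ms"
proof -
  have "(\<Sum>m\<in>(+) ms ` mons D. wt b m) = (\<Sum>n\<in>mons D. wt b ms + wt b n)"
    by (subst sum.reindex) (simp_all add: inj_on_def wt_add)
  then show ?thesis
    by (simp add: sum.distrib sum_wt_mons_eq_0[OF assms])
qed

lemma det_nonzero_obtains_perm:
  fixes A :: "'a::idom mat"
  assumes "A \<in> carrier_mat n n" "det A \<noteq> 0"
  obtains p where "p permutes {0..<n}" "\<And>i. i < n \<Longrightarrow> A $$ (i, p i) \<noteq> 0"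
proof -
  have "(\<Sum>p\<in>{p. p permutes {0..<n}}. signof p * (\<Prod>i=0..<n. A $$ (i, p i))) \<noteq> 0"
    using assms by (simp add: det_def')
  then obtain p where "p permutes {0..<n}" "(\<Prod>i=0..<n. A $$ (i, p i)) \<noteq> 0"
    by (auto elim: sum.not_neutral_contains_not_neutral)
  then show ?thesis
    using that by simp
qed

lemma nonzero_vec_obtains_index:
  assumes "v \<in> carrier_vec n" "v \<noteq> 0\<^sub>v n"
  obtains j where "j < n" "vec_index v j \<noteq> 0"
proof -
  have "\<not> (\<forall>j<n. vec_index v j = 0)"
  proof
    assume "\<forall>j<n. vec_index v j = 0"
    then have "v = 0\<^sub>v n"
      using assms(1) by (intro eq_vecI) auto
    with assms(2) show False ..
  qed
  then show ?thesis
    using that by blast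
qed

lemma pluecker_nonzero_det_nonzero:
  fixes G :: "('n::finite, 'k::idom) hpoly"
  assumes G: "pluecker_nonzero G D I"
    and e: "bij_betw e {0..<q} I" and e': "bij_betw e' {0..<q} (mons D)"
  shows "det (mat q q (\<lambda>(i, j). Poly_Mapping.lookup (G * Poly_Mapping.single (e' j) 1) (e i))) \<noteq> 0"
    (is "det ?A \<noteq> 0")
proof
  assume "det ?A = 0"
  then obtain v where v: "v \<in> carrier_vec q" "v \<noteq> 0\<^sub>v q" "?A *\<^sub>v v = 0\<^sub>v q"
    using det_0_iff_vec_prod_zero[of ?A q] by auto
  obtain j0 where j0: "j0 < q" "vec_index v j0 \<noteq> 0"
    using nonzero_vec_obtains_index[OF v(1,2)] .
  define h where "h = (\<Sum>j\<in>{0..<q}. Poly_Mapping.single (e' j) (vec_index v j))"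
  have "Poly_Mapping.keys h \<subseteq> mons D"
    using keys_sum[of "\<lambda>j. Poly_Mapping.single (e' j) (vec_index v j)" "{0..<q}"] bij_betwE[OF e']
    by (auto simp: h_def split: if_splits)
  then have h_homog: "h \<in> homog D"
    by (simp add: homog_def)
  have "Poly_Mapping.lookup h (e' j0) = (\<Sum>j\<in>{0..<q}. if j = j0 then vec_index v j else 0)"
    unfolding h_def lookup_sum lookup_single
    using j0(1) bij_betw_imp_inj_on[OF e'] by (intro sum.cong refl) (auto simp: when_def inj_on_eq_iff)
  also have "\<dots> = vec_index v j0"
    using j0(1) by simp
  finally have "h \<noteq> 0" using j0(2) by auto
  with G h_homog obtain m where m: "m \<in> I" "Poly_Mapping.lookup (G * h) m \<noteq> 0"
    unfolding pluecker_nonzero_def by blast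
  then obtain i where i: "i < q" "m = e i"
    using bij_betw_imp_surj_on[OF e] by auto
  have "Poly_Mapping.lookup (G * h) (e i) =
      (\<Sum>j\<in>{0..<q}. Poly_Mapping.lookup (G * Poly_Mapping.single (e' j) (vec_index v j)) (e i))"
    by (simp add: h_def sum_distrib_left lookup_sum)
  also have "\<dots> = (\<Sum>j\<in>{0..<q}. ?A $$ (i, j) * vec_index v j)"
    using i(1) by (simp add: lookup_mult_single)
  also have "\<dots> = vec_index (?A *\<^sub>v v) i"
    using i(1) v(1) by (simp add: scalar_prod_def)
  also have "\<dots> = 0"
    using v(3) i(1) by simp
  finally show False
    using m i by simp
qed

lemma pluecker_nonzero_obtains_matching:
  fixes G :: "('n::finite, 'k::idom) hpoly"
  assumes G: "pluecker_nonzero G D I" and I: "finite I" "card I = card (mons D :: ('n \<Rightarrow>\<^sub>0 nat) set)"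
  obtains \<sigma> where "bij_betw \<sigma> I (mons D)" "\<And>m. m \<in> I \<Longrightarrow> \<exists>k\<in>Poly_Mapping.keys G. m = k + \<sigma> m"
proof -
  let ?q = "card (mons D :: ('n \<Rightarrow>\<^sub>0 nat) set)"
  obtain e where e: "bij_betw e {0..<?q} I"
    using ex_bij_betw_nat_finite[OF I(1)] I(2) by auto
  obtain e' :: "nat \<Rightarrow> 'n \<Rightarrow>\<^sub>0 nat" where e': "bij_betw e' {0..<?q} (mons D)"
    using ex_bij_betw_nat_finite[OF finite_mons] by blast
  let ?A = "mat ?q ?q (\<lambda>(i, j). Poly_Mapping.lookup (G * Poly_Mapping.single (e' j) 1) (e i))"
  have A: "?A \<in> carrier_mat ?q ?q"
    by simp
  obtain p where p: "p permutes {0..<?q}" and A_nonzero: "\<And>i. i < ?q \<Longrightarrow> ?A $$ (i, p i) \<noteq> 0"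
    by (rule det_nonzero_obtains_perm[OF A pluecker_nonzero_det_nonzero[OF G e e']]) blast
  define \<sigma> where "\<sigma> = e' \<circ> p \<circ> the_inv_into {0..<?q} e"
  have "bij_betw \<sigma> I (mons D)"
    unfolding \<sigma>_def
    by (intro bij_betw_trans[OF bij_betw_the_inv_into[OF e]] bij_betw_trans[OF permutes_imp_bij[OF p] e'])
  moreover have "\<exists>k\<in>Poly_Mapping.keys G. m = k + \<sigma> m" if m: "m \<in> I" for m
  proof -
    obtain i where i: "i < ?q" "m = e i"
      using m bij_betw_imp_surj_on[OF e] by auto
    then have \<sigma>_m: "\<sigma> (e i) = e' (p i)"
      using the_inv_into_f_f[OF bij_betw_imp_inj_on[OF e]] by (simp add: \<sigma>_def)
    have "p i < ?q"
      using p i(1) by (simp add: permutes_in_image)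
    then have "m \<in> Poly_Mapping.keys (G * Poly_Mapping.single (\<sigma> m) 1)"
      using A_nonzero[OF i(1)] i(1) unfolding i(2) \<sigma>_m by (simp add: in_keys_iff)
    then show ?thesis
      using keys_mult[of G "Poly_Mapping.single (\<sigma> m) 1"] by auto
  qed
  ultimately show ?thesis
    by (rule that)
qed

lemma pluecker_nonzero_wt_lower_bound:
  fixes G :: "('n::finite, 'k::idom) hpoly" and b :: "'n \<Rightarrow> int"
  assumes b: "sum b UNIV = 0"
    and G: "pluecker_nonzero G D I" and I: "finite I" "card I = card (mons D :: ('n \<Rightarrow>\<^sub>0 nat) set)"
  shows "int (card (mons D :: ('n \<Rightarrow>\<^sub>0 nat) set)) * Min (wt b ` Poly_Mapping.keys G) \<le> (\<Sum>m\<in>I. wt b m)"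
proof -
  let ?w = "Min (wt b ` Poly_Mapping.keys G)"
  obtain \<sigma> where \<sigma>: "bij_betw \<sigma> I (mons D)" "\<And>m. m \<in> I \<Longrightarrow> \<exists>k\<in>Poly_Mapping.keys G. m = k + \<sigma> m"
    using pluecker_nonzero_obtains_matching[OF G I] by blast
  have "(\<Sum>m\<in>I. wt b (\<sigma> m)) = 0"
    using sum_wt_mons_eq_0[OF b] by (simp add: sum.reindex_bij_betw[OF \<sigma>(1)])
  then have "int (card (mons D :: ('n \<Rightarrow>\<^sub>0 nat) set)) * ?w = (\<Sum>m\<in>I. ?w + wt b (\<sigma> m))"
    by (simp add: sum.distrib I(2))
  also have "\<dots> \<le> (\<Sum>m\<in>I. wt b m)"
  proof (rule sum_mono)
    fix m assume "m \<in> I"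
    then obtain k where k: "k \<in> Poly_Mapping.keys G" "m = k + \<sigma> m"
      using \<sigma>(2) by blast
    then have "?w \<le> wt b k"
      by (intro Min_le) auto
    moreover have "wt b m = wt b k + wt b (\<sigma> m)"
      using k(2) by (metis wt_add)
    ultimately show "?w + wt b (\<sigma> m) \<le> wt b m"
      by simp
  qed
  finally show ?thesis .
qed

lemma hilb_mu_eq:
  fixes G :: "('n::finite, 'k::idom) hpoly" and b :: "'n \<Rightarrow> int"
  assumes G: "G \<in> homog d" "G \<noteq> 0" and b: "sum b UNIV = 0"
  shows "hilb_mu d (d + D) G b = int (card (mons D :: ('n \<Rightarrow>\<^sub>0 nat) set)) * Min (wt b ` Poly_Mapping.keys G)"
proof -
  let ?q = "card (mons D :: ('n \<Rightarrow>\<^sub>0 nat) set)"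
  let ?Is = "{I. I \<subseteq> mons (d + D) \<and> card I = ?q \<and> pluecker_nonzero G D I}"
  have hilb_mu: "hilb_mu d (d + D) G b = Min ((\<lambda>I. \<Sum>m\<in>I. wt b m) ` ?Is)"
    unfolding hilb_mu_def pluecker_nonzero_def by (simp add: setcompr_eq_image)
  obtain ms where ms: "ms \<in> Poly_Mapping.keys G" "wt b ms = Min (wt b ` Poly_Mapping.keys G)"
    "pluecker_nonzero G D ((+) ms ` mons D)"
    using pluecker_nonzero_translate_mons[OF G(2)] by blast
  have "(+) ms ` mons D \<subseteq> mons (d + D)"
    using ms(1) G(1) by (auto simp: homog_def mons_def mdeg_add)
  moreover have "card ((+) ms ` mons D) = ?q"
    by (simp add: card_image)
  ultimately have translate: "(+) ms ` mons D \<in> ?Is"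
    using ms(3) by blast
  have "finite ?Is"
    by (rule finite_subset[of _ "Pow (mons (d + D))"]) (auto intro: finite_mons)
  show ?thesis
    unfolding hilb_mu
  proof (rule Min_eqI)
    show "finite ((\<lambda>I. \<Sum>m\<in>I. wt b m) ` ?Is)"
      using \<open>finite ?Is\<close> by (rule finite_imageI)
  next
    fix y assume "y \<in> (\<lambda>I. \<Sum>m\<in>I. wt b m) ` ?Is"
    then obtain I where I: "I \<in> ?Is" "y = (\<Sum>m\<in>I. wt b m)" by blast
    then have "finite I"
      using finite_subset[OF _ finite_mons] by blast
    with I show "int ?q * Min (wt b ` Poly_Mapping.keys G) \<le> y"
      using pluecker_nonzero_wt_lower_bound[OF b, of G D I] by simp
  next
    show "int ?q * Min (wt b ` Poly_Mapping.keys G) \<in> (\<lambda>I. \<Sum>m\<in>I. wt b m) ` ?Is"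
      by (rule image_eqI[OF _ translate]) (simp add: sum_wt_translate_mons[OF b] ms(2))
  qed
qed

section \<open>The action of GL on forms\<close>

definition gl_var :: "'k::comm_ring_1^'n^'n \<Rightarrow> 'n::finite \<Rightarrow> ('n, 'k) hpoly" where
  "gl_var g j = (\<Sum>i\<in>UNIV. hconst (g $ i $ j) * hvar i)"

definition gl_monom :: "'k::comm_ring_1^'n^'n \<Rightarrow> ('n::finite \<Rightarrow>\<^sub>0 nat) \<Rightarrow> ('n, 'k) hpoly" where
  "gl_monom g m = (\<Prod>j\<in>UNIV. gl_var g j ^ Poly_Mapping.lookup m j)"

lemma gl_act_eq: "gl_act g f = (\<Sum>m\<in>Poly_Mapping.keys f. hconst (Poly_Mapping.lookup f m) * gl_monom g m)"
  by (simp add: gl_act_def gl_monom_def gl_var_def)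

lemma hconst_0 [simp]: "hconst 0 = 0"
  by (simp add: hconst_def)

lemma hconst_1 [simp]: "hconst 1 = 1"
  by (simp add: hconst_def)

lemma hconst_add: "hconst (a + b) = hconst a + hconst b"
  by (simp add: hconst_def single_add)

lemma hconst_mult: "hconst (a * b) = (hconst a * hconst b :: ('n::finite, 'k::comm_ring_1) hpoly)"
  by (simp add: hconst_def mult_single)

lemma hconst_sum: "hconst (sum f A) = (\<Sum>a\<in>A. hconst (f a) :: ('n::finite, 'k::comm_ring_1) hpoly)"
  by (induct A rule: infinite_finite_induct) (simp_all add: hconst_add)

lemma gl_act_eq_superset:
  assumes "finite S" "Poly_Mapping.keys f \<subseteq> S"
  shows "gl_act g f = (\<Sum>m\<in>S. hconst (Poly_Mapping.lookup f m) * gl_monom g m)"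
  unfolding gl_act_eq by (rule sum.mono_neutral_left[OF assms]) (simp add: in_keys_iff)

lemma gl_act_0 [simp]: "gl_act g 0 = 0"
  by (simp add: gl_act_eq)

lemma gl_act_add: "gl_act g (p + q) = gl_act g p + gl_act g q"
proof -
  let ?S = "Poly_Mapping.keys p \<union> Poly_Mapping.keys q"
  have "gl_act g (p + q) = (\<Sum>m\<in>?S. hconst (Poly_Mapping.lookup (p + q) m) * gl_monom g m)"
    by (rule gl_act_eq_superset) (auto simp: keys_add)
  also have "\<dots> = (\<Sum>m\<in>?S. hconst (Poly_Mapping.lookup p m) * gl_monom g m) +
      (\<Sum>m\<in>?S. hconst (Poly_Mapping.lookup q m) * gl_monom g m)"
    by (simp add: lookup_add hconst_add distrib_right sum.distrib)
  also have "\<dots> = gl_act g p + gl_act g q"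
    by (simp add: gl_act_eq_superset[symmetric])
  finally show ?thesis .
qed

lemma gl_act_sum: "gl_act g (sum F A) = (\<Sum>a\<in>A. gl_act g (F a))"
  by (induct A rule: infinite_finite_induct) (simp_all add: gl_act_add)

lemma gl_act_single: "gl_act g (Poly_Mapping.single m c) = hconst c * gl_monom g m"
  using gl_act_eq_superset[of "{m}" "Poly_Mapping.single m c" g] by simp

lemma gl_monom_add: "gl_monom g (m + n) = gl_monom g m * gl_monom g n"
  by (simp add: gl_monom_def lookup_add power_add prod.distrib)

lemma gl_monom_0 [simp]: "gl_monom g 0 = 1"
  by (simp add: gl_monom_def)

lemma sum_single_lookup_keys:
  "(\<Sum>m\<in>Poly_Mapping.keys f. Poly_Mapping.single m (Poly_Mapping.lookup f m)) = f"
proof (rule poly_mapping_eqI)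
  fix x
  have "Poly_Mapping.lookup (\<Sum>m\<in>Poly_Mapping.keys f. Poly_Mapping.single m (Poly_Mapping.lookup f m)) x
     = (\<Sum>m\<in>Poly_Mapping.keys f. if m = x then Poly_Mapping.lookup f m else 0)"
    by (simp add: lookup_sum lookup_single when_def)
  also have "\<dots> = Poly_Mapping.lookup f x"
    by (simp add: in_keys_iff)
  finally show "Poly_Mapping.lookup (\<Sum>m\<in>Poly_Mapping.keys f. Poly_Mapping.single m (Poly_Mapping.lookup f m)) x
      = Poly_Mapping.lookup f x" .
qed

lemma gl_act_mult: "gl_act g (p * q) = gl_act g p * gl_act g (q :: ('n::finite, 'k::comm_ring_1) hpoly)"
proof -
  let ?P = "Poly_Mapping.keys p" and ?Q = "Poly_Mapping.keys q"
  have "p * q = (\<Sum>m\<in>?P. \<Sum>n\<in>?Q.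
      Poly_Mapping.single (m + n) (Poly_Mapping.lookup p m * Poly_Mapping.lookup q n))"
    by (subst (1 2) sum_single_lookup_keys[symmetric]) (simp add: sum_product mult_single)
  then have "gl_act g (p * q) = (\<Sum>m\<in>?P. \<Sum>n\<in>?Q.
      hconst (Poly_Mapping.lookup p m) * gl_monom g m * (hconst (Poly_Mapping.lookup q n) * gl_monom g n))"
    by (simp add: gl_act_sum gl_act_single hconst_mult gl_monom_add mult_ac)
  also have "\<dots> = gl_act g p * gl_act g q"
    by (simp add: gl_act_eq sum_product)
  finally show ?thesis .
qed

lemma gl_act_hconst [simp]: "gl_act g (hconst c) = hconst c"
  by (simp add: hconst_def gl_act_single)

lemma gl_act_power: "gl_act g (p ^ n) = gl_act g p ^ n"
  by (induct n) (simp_all add: gl_act_mult flip: hconst_1)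

lemma gl_act_prod: "gl_act g (prod F A) = (\<Prod>a\<in>A. gl_act g (F a))"
  by (induct A rule: infinite_finite_induct) (simp_all add: gl_act_mult flip: hconst_1)

lemma gl_act_hvar: "gl_act g (hvar i) = gl_var g i"
proof -
  have "gl_monom g (Poly_Mapping.single i 1) = (\<Prod>j\<in>UNIV. if j = i then gl_var g j else 1)"
    unfolding gl_monom_def by (intro prod.cong refl) (simp add: lookup_single when_def)
  then show ?thesis
    by (simp add: hvar_def gl_act_single)
qed

lemma gl_act_gl_var: "gl_act h (gl_var g j) = gl_var (h ** g) j"
proof -
  have "gl_act h (gl_var g j) = (\<Sum>i\<in>UNIV. hconst (g $ i $ j) * (\<Sum>k\<in>UNIV. hconst (h $ k $ i) * hvar k))"
    by (simp add: gl_var_def gl_act_sum gl_act_mult gl_act_hvar)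
  also have "\<dots> = (\<Sum>k\<in>UNIV. \<Sum>i\<in>UNIV. hconst (h $ k $ i * g $ i $ j) * hvar k)"
    by (subst sum.swap) (simp add: sum_distrib_left hconst_mult mult_ac)
  also have "\<dots> = gl_var (h ** g) j"
    by (simp add: gl_var_def matrix_matrix_mult_def hconst_sum sum_distrib_right)
  finally show ?thesis .
qed

lemma gl_act_gl_monom: "gl_act h (gl_monom g m) = gl_monom (h ** g) m"
  by (simp add: gl_monom_def gl_act_prod gl_act_power gl_act_gl_var)

lemma gl_act_gl_act: "gl_act h (gl_act g f) = gl_act (h ** g) f"
  unfolding gl_act_eq[of g f] gl_act_eq[of "h ** g" f]
  by (simp only: gl_act_sum gl_act_mult gl_act_gl_monom gl_act_hconst)

lemma hvar_power: "hvar j ^ k = (Poly_Mapping.single (Poly_Mapping.single j k) 1 :: ('n::finite, 'k::comm_ring_1) hpoly)"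
  by (induct k) (simp_all add: hvar_def mult_single single_add[symmetric] mult.commute)

lemma prod_single_one:
  "finite A \<Longrightarrow> (\<Prod>j\<in>A. Poly_Mapping.single (F j) (1 :: 'k::comm_ring_1)) = Poly_Mapping.single (\<Sum>j\<in>A. F j) 1"
  by (induct A rule: finite_induct) (simp_all add: mult_single)

lemma gl_var_id: "gl_var (Finite_Cartesian_Product.mat 1) j = (hvar j :: ('n::finite, 'k::comm_ring_1) hpoly)"
proof -
  have "gl_var (Finite_Cartesian_Product.mat 1) j = (\<Sum>i\<in>UNIV. if i = j then hvar i else (0 :: ('n, 'k) hpoly))"
    unfolding gl_var_def by (intro sum.cong refl) (simp add: Finite_Cartesian_Product.mat_def)
  then show ?thesis by simp
qed

lemma gl_monom_id: "gl_monom (Finite_Cartesian_Product.mat 1) m = (Poly_Mapping.single m 1 :: ('n::finite, 'k::comm_ring_1) hpoly)"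
proof -
  have "(\<Prod>j\<in>UNIV. Poly_Mapping.single (Poly_Mapping.single j (Poly_Mapping.lookup m j)) (1 :: 'k))
      = Poly_Mapping.single (\<Sum>j\<in>UNIV. Poly_Mapping.single j (Poly_Mapping.lookup m j)) 1"
    by (simp add: prod_single_one)
  also have "(\<Sum>j\<in>UNIV. Poly_Mapping.single j (Poly_Mapping.lookup m j)) = m"
    by (rule poly_mapping_eqI) (simp add: lookup_sum lookup_single when_def)
  finally show ?thesis
    by (simp add: gl_monom_def gl_var_id hvar_power)
qed

lemma gl_act_id: "gl_act (Finite_Cartesian_Product.mat 1) f = (f :: ('n::finite, 'k::comm_ring_1) hpoly)"
  using sum_single_lookup_keys[of f] by (simp add: gl_act_eq gl_monom_id hconst_def mult_single)

lemma gl_act_eq_0_iff: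
  assumes "invertible g"
  shows "gl_act g f = 0 \<longleftrightarrow> f = (0 :: ('n::finite, 'k::comm_ring_1) hpoly)"
proof
  from assms obtain g' where "g' ** g = Finite_Cartesian_Product.mat 1"
    by (auto simp: invertible_def)
  then have "gl_act g' (gl_act g f) = f"
    by (simp add: gl_act_gl_act gl_act_id)
  then show "gl_act g f = 0 \<Longrightarrow> f = 0"
    by simp
qed simp

lemma homog_0: "0 \<in> homog t"
  by (simp add: homog_def)

lemma homog_add: "p \<in> homog t \<Longrightarrow> q \<in> homog t \<Longrightarrow> p + q \<in> (homog t :: ('n::finite, 'k::comm_ring_1) hpoly set)"
  unfolding homog_def using keys_add[of p q] by blast

lemma homog_sum: "(\<And>x. x \<in> A \<Longrightarrow> F x \<in> homog t) \<Longrightarrow> sum F A \<in> (homog t :: ('n::finite, 'k::comm_ring_1) hpoly set)"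
  by (induct A rule: infinite_finite_induct) (simp_all add: homog_0 homog_add)

lemma homog_mult: "p \<in> homog s \<Longrightarrow> q \<in> homog t \<Longrightarrow> p * q \<in> (homog (s + t) :: ('n::finite, 'k::comm_ring_1) hpoly set)"
  unfolding homog_def mons_def using keys_mult[of p q] by (fastforce simp: mdeg_add)

lemma homog_hconst: "hconst c \<in> (homog 0 :: ('n::finite, 'k::comm_ring_1) hpoly set)"
  by (simp add: homog_def mons_0 hconst_def)

lemma homog_1: "1 \<in> (homog 0 :: ('n::finite, 'k::comm_ring_1) hpoly set)"
  using homog_hconst[of 1] by simp

lemma homog_hvar: "hvar i \<in> (homog 1 :: ('n::finite, 'k::comm_ring_1) hpoly set)"
  by (simp add: homog_def hvar_def single_in_mons[of i 1, simplified])

lemma homog_power: "p \<in> homog t \<Longrightarrow> p ^ k \<in> (homog (t * k) :: ('n::finite, 'k::comm_ring_1) hpoly set)"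
  by (induct k) (simp_all add: homog_1 homog_mult[of p t _ "t * _", simplified])

lemma homog_prod:
  "finite A \<Longrightarrow> (\<And>x. x \<in> A \<Longrightarrow> F x \<in> homog (t x)) \<Longrightarrow> prod F A \<in> (homog (sum t A) :: ('n::finite, 'k::comm_ring_1) hpoly set)"
  by (induct A rule: finite_induct) (simp_all add: homog_1 homog_mult)

lemma homog_gl_var: "gl_var g j \<in> (homog 1 :: ('n::finite, 'k::comm_ring_1) hpoly set)"
  unfolding gl_var_def using homog_mult[OF homog_hconst homog_hvar] by (intro homog_sum) simp

lemma homog_gl_monom: "gl_monom g m \<in> (homog (mdeg m) :: ('n::finite, 'k::comm_ring_1) hpoly set)"
  unfolding gl_monom_def mdeg_def using homog_power[OF homog_gl_var] by (intro homog_prod) simp_all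

lemma homog_gl_act:
  assumes "f \<in> homog d"
  shows "gl_act g f \<in> (homog d :: ('n::finite, 'k::comm_ring_1) hpoly set)"
  unfolding gl_act_eq
proof (rule homog_sum)
  fix m assume "m \<in> Poly_Mapping.keys f"
  then have "mdeg m = d"
    using assms by (auto simp: homog_def mons_def)
  then show "hconst (Poly_Mapping.lookup f m) * gl_monom g m \<in> homog d"
    using homog_mult[OF homog_hconst homog_gl_monom, of _ g m] by simp
qed

section \<open>Rescaling of the normalized weights\<close>

lemma hratio_shift:
  fixes f :: "('n::finite, 'k::idom) hpoly"
  assumes f: "f \<in> homog d" "f \<noteq> 0" and g: "invertible g" and b: "b \<in> torus_H"
  shows "hratio d (d + D) f g b = real (card (mons D :: ('n \<Rightarrow>\<^sub>0 nat) set)) * hratio d d f g b"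
proof -
  have G: "gl_act g f \<in> homog d" "gl_act g f \<noteq> 0"
    using homog_gl_act[OF f(1)] f(2) gl_act_eq_0_iff[OF g] by auto
  have "sum b UNIV = 0"
    using b by (simp add: torus_H_def)
  note hilb_mu = hilb_mu_eq[OF G this]
  have "hilb_mu d d (gl_act g f) b = Min (wt b ` Poly_Mapping.keys (gl_act g f))"
    using hilb_mu[of 0] by (simp add: mons_0)
  then show ?thesis
    by (simp add: hratio_def hilb_mu)
qed

lemma is_max_value_rescale:
  assumes "q > 0" and "\<And>g b. invertible g \<Longrightarrow> b \<in> torus_H \<Longrightarrow> hratio d t' f g b = q * hratio d t f g b"
  shows "is_max_value d t' f (q * x) \<longleftrightarrow> is_max_value d t f x"
  unfolding is_max_value_def using assms by (simp cong: conj_cong)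

lemma is_max_value_shift:
  fixes f :: "('n::finite, 'k::idom) hpoly"
  assumes "f \<in> homog d" "f \<noteq> 0"
  shows "is_max_value d (d + D) f (real (card (mons D :: ('n \<Rightarrow>\<^sub>0 nat) set)) * x) \<longleftrightarrow> is_max_value d d f x"
  using card_mons_pos hratio_shift[OF assms] by (intro is_max_value_rescale) auto

lemma hstratum_shift:
  fixes a :: "'n::finite \<Rightarrow> int"
  assumes a: "a \<in> torus_H"
  shows "(hstratum d (d + D) a (real (card (mons D :: ('n \<Rightarrow>\<^sub>0 nat) set)) * \<delta>) :: ('n, 'k::idom) hpoly set)
    = hstratum d d a \<delta>"
proof (rule Set.set_eqI)
  let ?q = "real (card (mons D :: ('n \<Rightarrow>\<^sub>0 nat) set))"
  have q: "?q > 0"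
    using card_mons_pos by simp
  fix f :: "('n, 'k) hpoly"
  show "f \<in> hstratum d (d + D) a (?q * \<delta>) \<longleftrightarrow> f \<in> hstratum d d a \<delta>"
  proof (cases "f \<in> homog d \<and> f \<noteq> 0")
    case True
    then have "hratio d (d + D) f g a = ?q * hratio d d f g a" if "invertible g" for g
      using hratio_shift a that by blast
    then have "(\<exists>g. invertible g \<and> hratio d (d + D) f g a = ?q * \<delta>) \<longleftrightarrow>
        (\<exists>g. invertible g \<and> hratio d d f g a = \<delta>)"
      using q by auto
    then show ?thesis
      using True by (simp add: hstratum_def is_max_value_shift)
  qed (auto simp: hstratum_def)
qed

lemma ex_pos_rescale:
  fixes c :: real
  assumes "c > 0"
  shows "(\<exists>x>0. P (c * x)) \<longleftrightarrow> (\<exists>x>0. P x)"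
proof
  assume "\<exists>x>0. P (c * x)"
  then obtain x where "x > 0" "P (c * x)" by blast
  then show "\<exists>x>0. P x"
    using assms by (intro exI[of _ "c * x"]) simp
next
  assume "\<exists>x>0. P x"
  then obtain x where "x > 0" "P x" by blast
  then show "\<exists>x>0. P (c * x)"
    using assms by (intro exI[of _ "x / c"]) simp
qed

lemma hunstable_shift: "(hunstable d (d + D) :: ('n::finite, 'k::idom) hpoly set) = hunstable d d"
proof (rule Set.set_eqI)
  let ?q = "real (card (mons D :: ('n \<Rightarrow>\<^sub>0 nat) set))"
  have q: "?q > 0"
    using card_mons_pos by simp
  fix f :: "('n, 'k) hpoly"
  show "f \<in> hunstable d (d + D) \<longleftrightarrow> f \<in> hunstable d d"
  proof (cases "f \<in> homog d \<and> f \<noteq> 0")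
    case True
    then have "(\<exists>x>0. is_max_value d (d + D) f x) \<longleftrightarrow> (\<exists>x>0. is_max_value d d f x)"
      using ex_pos_rescale[OF q, of "is_max_value d (d + D) f"] by (simp add: is_max_value_shift)
    then show ?thesis
      using True by (simp add: hunstable_def)
  qed (auto simp: hunstable_def)
qed

theorem theorem1:
  fixes a :: "'n::finite \<Rightarrow> int" and d D :: nat and \<delta> :: real
  assumes "CARD('n) \<ge> 2"
    and "d \<ge> 1"
    and "a \<in> torus_H" and "indivisible a"
    and "\<delta> > 0"
  shows "(hstratum d (d + D) a (real (card (mons D :: ('n \<Rightarrow>\<^sub>0 nat) set)) * \<delta>)
            :: ('n, 'k::alg_closed_field) hpoly set)
         = hstratum d d a \<delta>
       \<and> (hunstable d (d + D) :: ('n, 'k) hpoly set) = hunstable d d"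
  using hstratum_shift[OF assms(3)] hunstable_shift by blast

end
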